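(* For every $c\in(0,1/2)$ and constants $0<c_1\le c_2$ there exist $C>0$ and $n_0$ such that the following holds. Let $m=\lceil c^{-1}+1\rceil$, let $n\ge n_0$ with $m\mid(n-1)$, $D=(n-1)/m$, let $p$ be a prime with $c_1n^c\le p\le c_2n^c$, and $\theta=\pi/p$. Then the state $$|\psi\rangle=\Big(\big(U_{m,\theta}^\dagger\big)^{\otimes D}\otimes e^{-i\pi X/4}\Big)H^{\otimes n}|\mathrm{GHZ}_n\rangle$$ (where $U_{m,\theta}$ is unitary), measured in the computational basis, yields a distribution $P_\psi$ on $\{0,1\}^{n-1}\times\{0,1\}$ with $$\Delta\big(P_\psi,(X,\mathrm{majmod}_p(X)\oplus\mathrm{parity}(X))\big)\le\tfrac12-\tfrac1\pi+\tfrac Cp,$$ $X$ uniform on $\{0,1\}^{n-1}$.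
   Context: $|\mathrm{GHZ}_n\rangle=(|0^n\rangle+|1^n\rangle)/\sqrt2$; $H$ Hadamard; $X$ Pauli-$X$; the $D$ copies of $U_{m,\theta}^\dagger$ act on consecutive blocks of $m$ qubits among the first $n-1$. $M_{m,\theta}|x_1\cdots x_m\rangle=\bigotimes_{j=1}^m e^{-i\theta x_{j-1}X}|x_j\rangle$ (indices mod $m$, $x_0=x_m$). For $x\in\{0,1\}^m$ let $\bar x$ be its complement and $\gamma_x=\langle\bar x|M_{m,\theta}^\dagger M_{m,\theta}|x\rangle$; $U_{m,\theta}|x\rangle=M_{m,\theta}|x\rangle$ if $x_1=0$ and $U_{m,\theta}|x\rangle=(M_{m,\theta}|x\rangle-\gamma_xM_{m,\theta}|\bar x\rangle)/\sqrt{1-|\gamma_x|^2}$ if $x_1=1$. $\mathrm{parity}(x)=|x|\bmod2$; $\mathrm{majmod}_p(x)=0$ if $(|x|\bmod p)<p/2$, else $1$. $\Delta$ is total variation distance. *)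

theory Defs
  imports Complex_Main "HOL-Computational_Algebra.Primes"
begin

text \<open>Bitstrings of length k are lists of booleans (True = 1, False = 0); qubit j of a
register corresponds to list position j (0-indexed).\<close>

definition bitstrings :: "nat \<Rightarrow> bool list set" where
  "bitstrings k = {xs. length xs = k}"

definition weight :: "bool list \<Rightarrow> nat" where
  "weight xs = length (filter id xs)"

definition parity :: "bool list \<Rightarrow> bool" where
  "parity xs = odd (weight xs)"

definition majmod :: "nat \<Rightarrow> bool list \<Rightarrow> bool" where
  "majmod p xs = (\<not> (real (weight xs mod p) < real p / 2))"

definition compl_bits :: "bool list \<Rightarrow> bool list" where
  "compl_bits xs = map Not xs"

text \<open>Operators are given by their matrix entries: A y x = <y|A|x>. States are amplitude
functions on bitstrings.\<close>

type_synonym qop = "bool list \<Rightarrow> bool list \<Rightarrow> complex"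
type_synonym qstate = "bool list \<Rightarrow> complex"

definition apply_op :: "nat \<Rightarrow> qop \<Rightarrow> qstate \<Rightarrow> qstate" where
  "apply_op k A v = (\<lambda>y. \<Sum>x\<in>bitstrings k. A y x * v x)"

definition adjoint :: "qop \<Rightarrow> qop" where
  "adjoint A = (\<lambda>y x. cnj (A x y))"

text \<open>Single-qubit matrix of exp(-i t X) = cos t I - i sin t X.\<close>
definition expX :: "real \<Rightarrow> bool \<Rightarrow> bool \<Rightarrow> complex" where
  "expX t b a = (if b = a then complex_of_real (cos t) else - \<i> * complex_of_real (sin t))"

text \<open>M_{m,theta}|x_1..x_m> = tensor_j exp(-i theta x_{j-1} X)|x_j>, x_0 = x_m.
 With 0-indexed positions, the control of position j is position (j+m-1) mod m.\<close>
definition M_op :: "nat \<Rightarrow> real \<Rightarrow> qop" where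
  "M_op m \<theta> y x = (\<Prod>j<m. if x ! ((j + m - 1) mod m) then expX \<theta> (y ! j) (x ! j)
                            else (if y ! j = x ! j then 1 else 0))"

definition gamma :: "nat \<Rightarrow> real \<Rightarrow> bool list \<Rightarrow> complex" where
  "gamma m \<theta> x = (\<Sum>z\<in>bitstrings m. cnj (M_op m \<theta> z (compl_bits x)) * M_op m \<theta> z x)"

definition U_op :: "nat \<Rightarrow> real \<Rightarrow> qop" where
  "U_op m \<theta> y x =
     (if \<not> x ! 0 then M_op m \<theta> y x
      else (M_op m \<theta> y x - gamma m \<theta> x * M_op m \<theta> y (compl_bits x))
           / complex_of_real (sqrt (1 - (cmod (gamma m \<theta> x))\<^sup>2)))"

definition block :: "nat \<Rightarrow> nat \<Rightarrow> bool list \<Rightarrow> bool list" where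
  "block m k xs = take m (drop (k * m) xs)"

text \<open>(U^dagger)^{tensor D} tensor exp(-i pi X/4) on m*D+1 qubits; block k = qubits k*m..k*m+m-1,
 last qubit = position m*D.\<close>
definition circuit_op :: "nat \<Rightarrow> real \<Rightarrow> nat \<Rightarrow> qop" where
  "circuit_op m \<theta> D y x =
     (\<Prod>k<D. adjoint (U_op m \<theta>) (block m k y) (block m k x)) * expX (pi / 4) (y ! (m * D)) (x ! (m * D))"

definition hadamard_n :: "nat \<Rightarrow> qop" where
  "hadamard_n n y x = (\<Prod>i<n. (if x ! i \<and> y ! i then -1 else 1) / complex_of_real (sqrt 2))"

definition ghz :: "nat \<Rightarrow> qstate" where
  "ghz n x = (if x = replicate n False \<or> x = replicate n True
              then 1 / complex_of_real (sqrt 2) else 0)"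

definition psi :: "nat \<Rightarrow> real \<Rightarrow> nat \<Rightarrow> qstate" where
  "psi m \<theta> n = apply_op n (circuit_op m \<theta> ((n - 1) div m)) (apply_op n (hadamard_n n) (ghz n))"

text \<open>Computational-basis measurement distribution; outcome z of length n is identified
 with (take (n-1) z, z ! (n-1)) in {0,1}^(n-1) x {0,1}.\<close>
definition P_psi :: "nat \<Rightarrow> real \<Rightarrow> nat \<Rightarrow> bool list \<Rightarrow> real" where
  "P_psi m \<theta> n z = (cmod (psi m \<theta> n z))\<^sup>2"

definition target_dist :: "nat \<Rightarrow> nat \<Rightarrow> bool list \<Rightarrow> real" where
  "target_dist p n z =
     (let xs = take (n - 1) z; b = z ! (n - 1) in
      if b = (majmod p xs \<noteq> parity xs) then 1 / 2 ^ (n - 1) else 0)"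

definition tvd :: "'a set \<Rightarrow> ('a \<Rightarrow> real) \<Rightarrow> ('a \<Rightarrow> real) \<Rightarrow> real" where
  "tvd S P Q = (\<Sum>z\<in>S. \<bar>P z - Q z\<bar>) / 2"

end

theory Submission
  imports Defs "HOL-Real_Asymp.Real_Asymp"
begin

text \<open>
  The Hadamards turn the GHZ state into an equal superposition of the uniform states with
  signs 1 and (-1)^|x|. If every U were replaced by M, each block would only pick up the phase
  exp(-+ i theta |z|), so measuring x on the first n - 1 qubits would leave the last qubit
  with bias (1 +- sin (2 theta |x|)) / 2, the sign agreeing with parity x exactly when
  majmod_p x = 0. This ideal distribution is at distance (1 - E |sin (2 pi |X| / p)|) / 2 from
  the target. As p^2 is much smaller than n, the weight of a uniform X is equidistributed
  modulo p up to p cos (pi / p)^(n-1) (a character-sum bound), and the average of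
  |sin (2 pi r / p)| over the residues r is at least 2 / pi - 1 / p.
  The Gram-Schmidt correction distinguishing U from M has overlap |gamma_x| = |sin theta|^m,
  so it moves each block amplitude by O(|sin theta|^m), and all D < n blocks together by
  O(n theta^m) = O(1 / p) because c m >= 1 + c.
\<close>

section \<open>Sums over bitstrings\<close>

lemma finite_bitstrings [simp]: "finite (bitstrings k)"
  unfolding bitstrings_def using finite_lists_length_eq[of "UNIV::bool set" k] by simp

lemma card_bitstrings: "card (bitstrings k) = 2 ^ k"
  unfolding bitstrings_def using card_lists_length_eq[of "UNIV::bool set" k] by simp

lemma mem_bitstrings [simp]: "xs \<in> bitstrings k \<longleftrightarrow> length xs = k"
  unfolding bitstrings_def by simp

lemma bitstrings_1: "bitstrings (Suc 0) = {[True], [False]}"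
proof -
  have "length x = Suc 0 \<Longrightarrow> x = [True] \<or> x = [False]" for x
    by (cases x) auto
  then show ?thesis by (auto simp: bitstrings_def)
qed

lemma bitstrings_add: "bitstrings (a + b) = (\<lambda>(y, z). y @ z) ` (bitstrings a \<times> bitstrings b)"
proof -
  have "x \<in> (\<lambda>(y, z). y @ z) ` (bitstrings a \<times> bitstrings b)" if "length x = a + b" for x
    using that by (intro image_eqI[of _ _ "(take a x, drop a x)"]) auto
  then show ?thesis by auto
qed

lemma sum_bitstrings_add:
  "(\<Sum>x\<in>bitstrings (a + b). F x) = (\<Sum>y\<in>bitstrings a. \<Sum>z\<in>bitstrings b. F (y @ z))"
proof -
  have inj: "inj_on (\<lambda>(y, z). y @ z) (bitstrings a \<times> bitstrings b)"
    by (auto simp: inj_on_def)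
  have "(\<Sum>x\<in>bitstrings (a + b). F x) = (\<Sum>q\<in>bitstrings a \<times> bitstrings b. F ((\<lambda>(y, z). y @ z) q))"
    unfolding bitstrings_add by (rule sum.reindex[OF inj, unfolded comp_def])
  also have "\<dots> = (\<Sum>y\<in>bitstrings a. \<Sum>z\<in>bitstrings b. F (y @ z))"
    by (simp add: sum.cartesian_product prod.case_distrib)
  finally show ?thesis .
qed

lemma sum_bitstrings_Suc:
  "(\<Sum>x\<in>bitstrings (Suc k). F x) = (\<Sum>xs\<in>bitstrings k. F (True # xs) + F (False # xs))"
proof -
  have "(\<Sum>x\<in>bitstrings (Suc 0 + k). F x) = (\<Sum>y\<in>bitstrings (Suc 0). \<Sum>xs\<in>bitstrings k. F (y @ xs))"
    by (rule sum_bitstrings_add)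
  then show ?thesis by (simp add: bitstrings_1 sum.distrib)
qed

lemma sum_bitstrings_prod:
  fixes g :: "nat \<Rightarrow> bool \<Rightarrow> 'a::comm_ring_1"
  shows "(\<Sum>y\<in>bitstrings k. \<Prod>j<k. g j (y ! j)) = (\<Prod>j<k. g j True + g j False)"
proof (induction k arbitrary: g)
  case 0
  have "bitstrings 0 = {[]}" by (auto simp: bitstrings_def)
  then show ?case by simp
next
  case (Suc k)
  have "(\<Sum>y\<in>bitstrings (Suc k). \<Prod>j<Suc k. g j (y ! j))
      = (g 0 True + g 0 False) * (\<Sum>xs\<in>bitstrings k. \<Prod>j<k. g (Suc j) (xs ! j))"
    unfolding sum_bitstrings_Suc
    by (simp add: prod.lessThan_Suc_shift sum.distrib sum_distrib_left algebra_simps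
        del: prod.lessThan_Suc)
  also have "\<dots> = (\<Prod>j<Suc k. g j True + g j False)"
    using Suc[of "\<lambda>j. g (Suc j)"] by (simp add: prod.lessThan_Suc_shift del: prod.lessThan_Suc)
  finally show ?case .
qed

lemma weight_Nil [simp]: "weight [] = 0"
  by (simp add: weight_def)

lemma weight_Cons [simp]: "weight (a # xs) = (if a then 1 else 0) + weight xs"
  by (simp add: weight_def)

lemma weight_append [simp]: "weight (xs @ ys) = weight xs + weight ys"
  by (simp add: weight_def)

lemma prod_if_nth_eq_power_weight:
  fixes a :: "'a::comm_monoid_mult"
  shows "length xs = k \<Longrightarrow> (\<Prod>i<k. if xs ! i then a else 1) = a ^ weight xs"
proof (induction xs arbitrary: k)
  case Nil then show ?case by simp
next
  case (Cons x xs) then show ?case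
    by (auto simp: prod.lessThan_Suc_shift simp del: prod.lessThan_Suc)
qed

lemma sum_bitstrings_power_weight:
  fixes u :: "'a::comm_ring_1"
  shows "(\<Sum>x\<in>bitstrings k. u ^ weight x) = (1 + u) ^ k"
proof -
  have "(\<Sum>x\<in>bitstrings k. u ^ weight x) = (\<Sum>x\<in>bitstrings k. \<Prod>i<k. if x ! i then u else 1)"
    by (intro sum.cong refl) (simp add: prod_if_nth_eq_power_weight)
  also have "\<dots> = (1 + u) ^ k" by (subst sum_bitstrings_prod) (simp add: add.commute)
  finally show ?thesis .
qed

lemma sum_mod_eq_sum_residues:
  fixes f :: "nat \<Rightarrow> real"
  assumes "p > 0" and "finite A"
  shows "(\<Sum>x\<in>A. f (h x mod p)) = (\<Sum>r<p. f r * real (card {x \<in> A. h x mod p = r}))"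
proof -
  have "(\<Sum>x\<in>A. f (h x mod p)) = (\<Sum>x\<in>A. \<Sum>r<p. if h x mod p = r then f r else 0)"
    by (intro sum.cong refl) (simp add: sum.delta' assms(1))
  also have "\<dots> = (\<Sum>r<p. \<Sum>x\<in>A. if h x mod p = r then f r else 0)" by (rule sum.swap)
  also have "\<dots> = (\<Sum>r<p. f r * real (card {x \<in> A. h x mod p = r}))"
    using assms(2) by (intro sum.cong refl) (simp add: sum.If_cases Int_def)
  finally show ?thesis .
qed

lemma block_append_0: "length y = m \<Longrightarrow> block m 0 (y @ x) = y"
  by (simp add: block_def)

lemma block_append_Suc: "length y = m \<Longrightarrow> block m (Suc k) (y @ x) = block m k x"
  by (simp add: block_def add.commute)

lemma block_snoc: "k < D \<Longrightarrow> length x = m * D \<Longrightarrow> block m k (x @ [b]) = block m k x"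
  using mult_le_mono2[of "Suc k" D m] by (simp add: block_def mult.commute)

lemma length_block: "k < D \<Longrightarrow> m * D \<le> length z \<Longrightarrow> length (block m k z) = m"
  using mult_le_mono2[of "Suc k" D m] by (simp add: block_def mult.commute)

lemma sum_bitstrings_blocks:
  fixes f :: "nat \<Rightarrow> bool list \<Rightarrow> 'a::comm_ring_1"
  shows "(\<Sum>x\<in>bitstrings (m * D + 1). (\<Prod>k<D. f k (block m k x)) * h (x ! (m * D)) * s ^ weight x)
       = (\<Prod>k<D. \<Sum>y\<in>bitstrings m. f k y * s ^ weight y) * (h False + h True * s)"
proof (induction D arbitrary: f)
  case 0
  show ?case by (simp add: bitstrings_1)
next
  case (Suc D)
  have split: "(\<Prod>k<Suc D. f k (block m k (y @ z))) * h ((y @ z) ! (m * Suc D)) * s ^ weight (y @ z)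
       = (f 0 y * s ^ weight y) * ((\<Prod>k<D. f (Suc k) (block m k z)) * h (z ! (m * D)) * s ^ weight z)"
    if y: "length y = m" for y z
  proof -
    have "(\<Prod>k<Suc D. f k (block m k (y @ z))) = f 0 y * (\<Prod>k<D. f (Suc k) (block m k z))"
      by (simp only: prod.lessThan_Suc_shift block_append_0[OF y] block_append_Suc[OF y])
    moreover have "(y @ z) ! (m * Suc D) = z ! (m * D)" using y by (simp add: nth_append)
    ultimately show ?thesis by (simp add: power_add mult_ac)
  qed
  have len: "m * Suc D + 1 = m + (m * D + 1)" by simp
  have "(\<Sum>x\<in>bitstrings (m * Suc D + 1). (\<Prod>k<Suc D. f k (block m k x)) * h (x ! (m * Suc D)) * s ^ weight x)
    = (\<Sum>y\<in>bitstrings m. \<Sum>z\<in>bitstrings (m * D + 1).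
         (f 0 y * s ^ weight y) * ((\<Prod>k<D. f (Suc k) (block m k z)) * h (z ! (m * D)) * s ^ weight z))"
    unfolding len by (subst sum_bitstrings_add, rule sum.cong[OF refl], rule sum.cong[OF refl], rule split) simp
  also have "\<dots> = (\<Sum>y\<in>bitstrings m. f 0 y * s ^ weight y) *
      ((\<Prod>k<D. \<Sum>y\<in>bitstrings m. f (Suc k) y * s ^ weight y) * (h False + h True * s))"
    by (simp only: Suc[of "\<lambda>k. f (Suc k)"] sum_distrib_left[symmetric] sum_distrib_right)
  also have "\<dots> = (\<Prod>k<Suc D. \<Sum>y\<in>bitstrings m. f k y * s ^ weight y) * (h False + h True * s)"
    by (simp only: prod.lessThan_Suc_shift mult.assoc)
  finally show ?case .
qed

lemma sum_weight_blocks: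
  "length x = m * D \<Longrightarrow> (\<Sum>k<D. weight (block m k x)) = weight x"
proof (induction D arbitrary: x)
  case 0
  then show ?case by simp
next
  case (Suc D)
  define y where "y = take m x"
  define z where "z = drop m x"
  have x: "x = y @ z" "length y = m" "length z = m * D"
    using Suc.prems by (auto simp: y_def z_def)
  have "(\<Sum>k<Suc D. weight (block m k x)) = weight y + (\<Sum>k<D. weight (block m k z))"
    unfolding x(1) by (simp only: sum.lessThan_Suc_shift block_append_0[OF x(2)] block_append_Suc[OF x(2)])
  also have "\<dots> = weight x" using Suc.IH[OF x(3)] x(1) by simp
  finally show ?case .
qed

section \<open>The amplitudes of the circuit\<close>

lemma hadamard_ghz:
  assumes "n \<ge> 1" and "length x = n"
  shows "apply_op n (hadamard_n n) (ghz n) x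
           = (1 / complex_of_real (sqrt 2)) ^ (n + 1) * (1 + (-1) ^ weight x)"
proof -
  define a :: complex where "a = 1 / complex_of_real (sqrt 2)"
  have distinct: "replicate n False \<noteq> replicate n True" using assms(1) by (cases n) auto
  have "apply_op n (hadamard_n n) (ghz n) x
      = (\<Sum>y\<in>bitstrings n. (if y = replicate n False then hadamard_n n x y * a else 0))
      + (\<Sum>y\<in>bitstrings n. (if y = replicate n True then hadamard_n n x y * a else 0))"
    unfolding apply_op_def sum.distrib[symmetric]
    by (intro sum.cong refl) (use distinct in \<open>auto simp: ghz_def a_def\<close>)
  also have "\<dots> = hadamard_n n x (replicate n False) * a + hadamard_n n x (replicate n True) * a"
    by (simp add: sum.delta)
  also have "hadamard_n n x (replicate n False) = a ^ n"
    by (simp add: hadamard_n_def a_def)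
  also have "hadamard_n n x (replicate n True) = (\<Prod>i<n. if x ! i then -1 else 1) * a ^ n"
    by (simp add: hadamard_n_def a_def prod.distrib divide_inverse cong: if_cong)
  also have "(\<Prod>i<n. if x ! i then -1 else 1 :: complex) = (-1) ^ weight x"
    using prod_if_nth_eq_power_weight[OF assms(2)] .
  finally show ?thesis by (simp add: a_def algebra_simps add_divide_distrib)
qed

text \<open>For s = 1 and s = -1 these sums are, up to normalisation, amplitudes on the product
  state (|0> + s |1>)^m; by hadamard_ghz, the input state is the sum of the two.\<close>

definition adjU_amp :: "nat \<Rightarrow> real \<Rightarrow> complex \<Rightarrow> bool list \<Rightarrow> complex" where
  "adjU_amp m \<theta> s z = (\<Sum>y\<in>bitstrings m. adjoint (U_op m \<theta>) z y * s ^ weight y)"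

definition M_amp :: "nat \<Rightarrow> real \<Rightarrow> complex \<Rightarrow> bool list \<Rightarrow> complex" where
  "M_amp m \<theta> s z = (\<Sum>y\<in>bitstrings m. M_op m \<theta> y z * s ^ weight y)"

definition rotX_amp :: "bool \<Rightarrow> complex \<Rightarrow> complex" where
  "rotX_amp b s = expX (pi / 4) b False + expX (pi / 4) b True * s"

lemma psi_eq_block_amps:
  assumes "m > 0" and n: "n = m * D + 1" and "length z = n"
  shows "psi m \<theta> n z = (1 / complex_of_real (sqrt 2)) ^ (n + 1) *
     ((\<Prod>k<D. adjU_amp m \<theta> 1 (block m k z)) * rotX_amp (z ! (m * D)) 1
    + (\<Prod>k<D. adjU_amp m \<theta> (-1) (block m k z)) * rotX_amp (z ! (m * D)) (-1))"
proof -
  define \<kappa> :: complex where "\<kappa> = (1 / complex_of_real (sqrt 2)) ^ (n + 1)"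
  have D: "(n - 1) div m = D" using assms by simp
  define F where "F x = (\<Prod>k<D. adjoint (U_op m \<theta>) (block m k z) (block m k x))
                        * expX (pi / 4) (z ! (m * D)) (x ! (m * D))" for x
  have "psi m \<theta> n z = (\<Sum>x\<in>bitstrings n. F x * (\<kappa> * (1 + (-1) ^ weight x)))"
    unfolding psi_def D apply_op_def[of n "circuit_op m \<theta> D"]
    by (rule sum.cong[OF refl]) (simp add: hadamard_ghz n \<kappa>_def F_def circuit_op_def)
  also have "\<dots> = \<kappa> * ((\<Sum>x\<in>bitstrings n. F x * 1 ^ weight x) + (\<Sum>x\<in>bitstrings n. F x * (-1) ^ weight x))"
    by (simp add: sum_distrib_left sum.distrib algebra_simps)
  also have "(\<Sum>x\<in>bitstrings n. F x * 1 ^ weight x)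
      = (\<Prod>k<D. adjU_amp m \<theta> 1 (block m k z)) * rotX_amp (z ! (m * D)) 1"
    unfolding n F_def adjU_amp_def rotX_amp_def by (rule sum_bitstrings_blocks)
  also have "(\<Sum>x\<in>bitstrings n. F x * (-1) ^ weight x)
      = (\<Prod>k<D. adjU_amp m \<theta> (-1) (block m k z)) * rotX_amp (z ! (m * D)) (-1)"
    unfolding n F_def adjU_amp_def rotX_amp_def by (rule sum_bitstrings_blocks)
  finally show ?thesis unfolding \<kappa>_def .
qed

lemma rotX_amp_1: "rotX_amp b 1 = cis (- (pi / 4))"
  by (cases b) (simp_all add: rotX_amp_def expX_def cis.ctr complex_eq_iff)

lemma rotX_amp_minus_1: "rotX_amp b (-1) = (if b then -1 else 1) * cis (pi / 4)"
  by (cases b) (simp_all add: rotX_amp_def expX_def cis.ctr complex_eq_iff)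

definition M_factor :: "nat \<Rightarrow> real \<Rightarrow> bool list \<Rightarrow> nat \<Rightarrow> bool \<Rightarrow> complex" where
  "M_factor m \<theta> z j a =
     (if z ! ((j + m - 1) mod m) then expX \<theta> a (z ! j) else (if a = z ! j then 1 else 0))"

lemma M_op_eq_prod: "M_op m \<theta> y z = (\<Prod>j<m. M_factor m \<theta> z j (y ! j))"
  by (simp add: M_op_def M_factor_def)

lemma prod_lessThan_rotate:
  fixes f :: "nat \<Rightarrow> 'a::comm_monoid_mult"
  assumes "m > 0"
  shows "(\<Prod>j<m. f ((j + m - 1) mod m)) = (\<Prod>j<m. f j)"
proof -
  obtain m' where m': "m = Suc m'" using assms by (cases m) auto
  have "(\<Prod>j<m. f ((j + m - 1) mod m)) = f m' * (\<Prod>j<m'. f ((Suc j + m - 1) mod m))"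
    unfolding m' prod.lessThan_Suc_shift by simp
  also have "(\<Prod>j<m'. f ((Suc j + m - 1) mod m)) = (\<Prod>j<m'. f j)"
  proof (intro prod.cong refl)
    fix j assume "j \<in> {..<m'}"
    then have "(Suc j + m - 1) mod m = (j + m) mod m" "j < m" by (auto simp: m')
    then show "f ((Suc j + m - 1) mod m) = f j" by simp
  qed
  finally show ?thesis by (simp add: m' mult.commute)
qed

lemma M_amp_1:
  assumes "m > 0" and z: "length z = m"
  shows "M_amp m \<theta> 1 z = cis (-\<theta>) ^ weight z"
proof -
  have "M_amp m \<theta> 1 z = (\<Prod>j<m. M_factor m \<theta> z j True + M_factor m \<theta> z j False)"
    unfolding M_amp_def power_one mult_1_right M_op_eq_prod by (rule sum_bitstrings_prod)
  also have "\<dots> = (\<Prod>j<m. if z ! ((j + m - 1) mod m) then cis (-\<theta>) else 1)"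
    by (intro prod.cong refl) (auto simp: M_factor_def expX_def cis.ctr complex_eq_iff)
  also have "\<dots> = (\<Prod>j<m. if z ! j then cis (-\<theta>) else 1)"
    using prod_lessThan_rotate[OF assms(1), of "\<lambda>j. if z ! j then cis (-\<theta>) else 1"] by simp
  also have "\<dots> = cis (-\<theta>) ^ weight z" using prod_if_nth_eq_power_weight[OF z] .
  finally show ?thesis .
qed

lemma M_amp_minus_1:
  assumes "m > 0" and z: "length z = m"
  shows "M_amp m \<theta> (-1) z = (-1) ^ weight z * cis \<theta> ^ weight z"
proof -
  define H where "H j a = M_factor m \<theta> z j a * (if a then -1 else 1)" for j a
  have "M_amp m \<theta> (-1) z = (\<Sum>y\<in>bitstrings m. \<Prod>j<m. H j (y ! j))"
    unfolding M_amp_def M_op_eq_prod H_def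
    by (intro sum.cong refl) (simp add: prod.distrib prod_if_nth_eq_power_weight)
  also have "\<dots> = (\<Prod>j<m. H j True + H j False)" by (rule sum_bitstrings_prod)
  also have "\<dots> = (\<Prod>j<m. (if z ! j then -1 else 1) * (if z ! ((j + m - 1) mod m) then cis \<theta> else 1))"
    by (intro prod.cong refl) (auto simp: H_def M_factor_def expX_def cis.ctr complex_eq_iff)
  also have "\<dots> = (\<Prod>j<m. if z ! j then -1 else 1) * (\<Prod>j<m. if z ! j then cis \<theta> else 1)"
    using prod_lessThan_rotate[OF assms(1), of "\<lambda>j. if z ! j then cis \<theta> else 1"]
    by (simp add: prod.distrib)
  also have "\<dots> = (-1) ^ weight z * cis \<theta> ^ weight z"
    by (simp only: prod_if_nth_eq_power_weight[OF z])
  finally show ?thesis .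
qed

lemma norm_M_amp:
  assumes "m > 0" and "length z = m" and "s = 1 \<or> s = -1"
  shows "cmod (M_amp m \<theta> s z) = 1"
  using assms M_amp_1[OF assms(1,2), of \<theta>] M_amp_minus_1[OF assms(1,2), of \<theta>]
  by (auto simp: norm_mult norm_power)

lemma norm_gamma:
  assumes m: "m > 0" and z: "length z = m"
  shows "cmod (gamma m \<theta> z) = \<bar>sin \<theta>\<bar> ^ m"
proof -
  have compl_nth: "compl_bits z ! ((j + m - 1) mod m) = (\<not> z ! ((j + m - 1) mod m))" for j
    using m z by (simp add: compl_bits_def)
  define H where "H j a = cnj (M_factor m \<theta> (compl_bits z) j a) * M_factor m \<theta> z j a" for j a
  have "gamma m \<theta> z = (\<Sum>y\<in>bitstrings m. \<Prod>j<m. H j (y ! j))"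
    unfolding gamma_def M_op_eq_prod H_def
    by (intro sum.cong refl) (simp add: prod.distrib cnj_prod)
  also have "\<dots> = (\<Prod>j<m. H j True + H j False)" by (rule sum_bitstrings_prod)
  also have "\<dots> = (\<Prod>j<m. if z ! ((j + m - 1) mod m) then - \<i> * sin \<theta> else \<i> * sin \<theta>)"
  proof (intro prod.cong refl)
    fix j assume "j \<in> {..<m}"
    then have "M_factor m \<theta> (compl_bits z) j a = (if \<not> z ! ((j + m - 1) mod m)
        then expX \<theta> a (\<not> z ! j) else (if a = (\<not> z ! j) then 1 else 0))" for a
      using z by (simp add: M_factor_def compl_nth compl_bits_def)
    then show "H j True + H j False = (if z ! ((j + m - 1) mod m) then - \<i> * sin \<theta> else \<i> * sin \<theta>)"
      by (auto simp: H_def M_factor_def[of m \<theta> z] expX_def complex_eq_iff)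
  qed
  also have "cmod \<dots> = (\<Prod>j<m. \<bar>sin \<theta>\<bar>)"
    unfolding prod_norm[symmetric] by (intro prod.cong refl) (simp add: norm_mult)
  finally show ?thesis by simp
qed

lemma adjU_amp_eq:
  assumes "cnj s = s"
  shows "adjU_amp m \<theta> s z = cnj (if \<not> z ! 0 then M_amp m \<theta> s z
     else (M_amp m \<theta> s z - gamma m \<theta> z * M_amp m \<theta> s (compl_bits z))
          / complex_of_real (sqrt (1 - (cmod (gamma m \<theta> z))\<^sup>2)))"
  using assms unfolding adjU_amp_def M_amp_def adjoint_def U_op_def
  by (cases "z ! 0")
    (simp_all add: cnj_sum sum_divide_distrib[symmetric] sum_subtractf sum_distrib_left algebra_simps)

section \<open>Replacing U by M\<close>

lemma sqrt_one_minus_square_bounds: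
  fixes g :: real
  assumes "0 \<le> g" "g \<le> 1/2"
  shows "1/2 \<le> sqrt (1 - g\<^sup>2)" and "1 - sqrt (1 - g\<^sup>2) \<le> g\<^sup>2"
proof -
  have "g * g \<le> 1/2 * (1/2)" using mult_mono[OF assms(2) assms(2)] assms(1) by simp
  then have g2: "g\<^sup>2 \<le> 1/4" by (simp add: power2_eq_square)
  show half: "1/2 \<le> sqrt (1 - g\<^sup>2)"
    by (rule real_le_rsqrt) (use g2 in \<open>simp add: power2_eq_square\<close>)
  define t where "t = sqrt (1 - g\<^sup>2)"
  have "t\<^sup>2 = 1 - g\<^sup>2" unfolding t_def by (rule real_sqrt_pow2) (use g2 in simp)
  moreover have "t * t \<le> t * 1" using half g2 by (intro mult_left_mono) (simp_all add: t_def)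
  then have "t\<^sup>2 \<le> t" by (simp add: power2_eq_square)
  ultimately show "1 - sqrt (1 - g\<^sup>2) \<le> g\<^sup>2" unfolding t_def by linarith
qed

lemma norm_orthogonalize_diff_le:
  fixes a b \<gamma> :: complex
  assumes a: "cmod a = 1" and b: "cmod b = 1" and g: "cmod \<gamma> \<le> 1/2"
  shows "cmod ((a - \<gamma> * b) / complex_of_real (sqrt (1 - (cmod \<gamma>)\<^sup>2)) - a) \<le> 4 * cmod \<gamma>"
proof -
  define g where "g = cmod \<gamma>"
  define r where "r = sqrt (1 - g\<^sup>2)"
  have g0: "0 \<le> g" "g \<le> 1/2" using g by (simp_all add: g_def)
  have r: "1/2 \<le> r" "1 - r \<le> g\<^sup>2" "r \<le> 1"
    using sqrt_one_minus_square_bounds[OF g0] by (simp_all add: r_def)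
  have "(a - \<gamma> * b) / complex_of_real r - a = a * complex_of_real ((1 - r) / r) - \<gamma> * b / complex_of_real r"
    using r by (simp add: field_simps)
  moreover have "cmod (a * complex_of_real ((1 - r) / r)) = (1 - r) / r"
    using a r by (simp only: norm_mult norm_of_real) simp
  moreover have "cmod (\<gamma> * b / complex_of_real r) = g / r"
    using b r by (simp add: norm_mult norm_divide g_def)
  ultimately have "cmod ((a - \<gamma> * b) / complex_of_real r - a) \<le> (1 - r) / r + g / r"
    by (metis norm_triangle_ineq4)
  also have "\<dots> \<le> 2 * g\<^sup>2 + 2 * g"
  proof (intro add_mono)
    have "g\<^sup>2 * 1 \<le> g\<^sup>2 * (2 * r)" and "g * 1 \<le> g * (2 * r)"
      using r(1) g0 by (intro mult_left_mono; simp)+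
    then show "(1 - r) / r \<le> 2 * g\<^sup>2" and "g / r \<le> 2 * g"
      using r by (simp_all add: pos_divide_le_eq)
  qed
  also have "\<dots> \<le> 4 * g"
    using g0 by (simp add: power2_eq_square mult_left_le_one_le)
  finally show ?thesis unfolding r_def g_def by simp
qed

lemma adjU_amp_close_M_amp:
  assumes m: "m > 0" and z: "length z = m" and s: "s = 1 \<or> s = -1"
    and small: "\<bar>sin \<theta>\<bar> ^ m \<le> 1/2"
  shows "cmod (adjU_amp m \<theta> s z - cnj (M_amp m \<theta> s z)) \<le> 4 * \<bar>sin \<theta>\<bar> ^ m"
proof (cases "z ! 0")
  case False
  with s show ?thesis by (auto simp: adjU_amp_eq)
next
  case True
  have "length (compl_bits z) = m" using z by (simp add: compl_bits_def)
  then have unit: "cmod (M_amp m \<theta> s z) = 1" "cmod (M_amp m \<theta> s (compl_bits z)) = 1"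
    using norm_M_amp[OF m _ s] z by auto
  have "cmod ((M_amp m \<theta> s z - gamma m \<theta> z * M_amp m \<theta> s (compl_bits z))
      / complex_of_real (sqrt (1 - (cmod (gamma m \<theta> z))\<^sup>2)) - M_amp m \<theta> s z)
      \<le> 4 * cmod (gamma m \<theta> z)"
    by (intro norm_orthogonalize_diff_le) (use unit norm_gamma[OF m z] small in auto)
  moreover have "cnj s = s" using s by auto
  moreover have "cnj w - cnj v = cnj (w - v)" for w v :: complex by simp
  ultimately show ?thesis
    using True by (simp only: adjU_amp_eq norm_gamma[OF m z] complex_mod_cnj if_False not_True_eq_False)
qed

lemma norm_prod_diff_le:
  fixes a b :: "nat \<Rightarrow> 'a::real_normed_field"
  assumes "\<And>k. k < D \<Longrightarrow> norm (a k - b k) \<le> \<delta>" and "\<And>k. k < D \<Longrightarrow> norm (b k) = 1"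
  shows "norm ((\<Prod>k<D. a k) - (\<Prod>k<D. b k)) \<le> (1 + \<delta>) ^ D - 1"
  using assms
proof (induction D)
  case 0 then show ?case by simp
next
  case (Suc D)
  have \<delta>: "0 \<le> \<delta>" using Suc.prems(1)[of 0] by (meson norm_ge_zero order_trans zero_less_Suc)
  have "norm (a k) \<le> 1 + \<delta>" if "k < Suc D" for k
    using Suc.prems(1)[OF that] Suc.prems(2)[OF that] norm_triangle_ineq2[of "a k" "b k"] by simp
  then have "norm (\<Prod>k<D. a k) \<le> (\<Prod>k<D. 1 + \<delta>)"
    unfolding prod_norm[symmetric] by (intro prod_mono) auto
  then have norm_a: "norm (\<Prod>k<D. a k) \<le> (1 + \<delta>) ^ D" by simp
  have "(\<Prod>k<Suc D. a k) - (\<Prod>k<Suc D. b k)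
      = (a D - b D) * (\<Prod>k<D. a k) + b D * ((\<Prod>k<D. a k) - (\<Prod>k<D. b k))"
    by (simp add: algebra_simps)
  then have "norm ((\<Prod>k<Suc D. a k) - (\<Prod>k<Suc D. b k))
      \<le> norm (a D - b D) * norm (\<Prod>k<D. a k) + norm (b D) * norm ((\<Prod>k<D. a k) - (\<Prod>k<D. b k))"
    by (metis norm_mult norm_triangle_ineq)
  also have "\<dots> \<le> \<delta> * (1 + \<delta>) ^ D + 1 * ((1 + \<delta>) ^ D - 1)"
    using Suc norm_a \<delta> by (intro add_mono mult_mono) auto
  also have "\<dots> = (1 + \<delta>) ^ Suc D - 1" by (simp add: algebra_simps)
  finally show ?case .
qed

lemma norm_prod_adjU_amp_diff_le:
  assumes m: "m > 0" and z: "m * D \<le> length z" and s: "s = 1 \<or> s = -1"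
    and small: "\<bar>sin \<theta>\<bar> ^ m \<le> 1/2"
  shows "cmod ((\<Prod>k<D. adjU_amp m \<theta> s (block m k z)) - (\<Prod>k<D. cnj (M_amp m \<theta> s (block m k z))))
           \<le> (1 + 4 * \<bar>sin \<theta>\<bar> ^ m) ^ D - 1"
  using length_block[OF _ z] adjU_amp_close_M_amp[OF m _ s small] norm_M_amp[OF m _ s]
  by (intro norm_prod_diff_le) auto

lemma abs_norm_square_diff_le:
  fixes u v :: "'a::real_normed_vector"
  shows "\<bar>(norm u)\<^sup>2 - (norm v)\<^sup>2\<bar> \<le> norm (u - v) * (norm (u - v) + 2 * norm v)"
proof -
  have diff: "\<bar>norm u - norm v\<bar> \<le> norm (u - v)" by (rule norm_triangle_ineq3)
  have "(norm u)\<^sup>2 - (norm v)\<^sup>2 = (norm u - norm v) * (norm u + norm v)"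
    by (simp add: power2_eq_square algebra_simps)
  then have "\<bar>(norm u)\<^sup>2 - (norm v)\<^sup>2\<bar> = \<bar>norm u - norm v\<bar> * (norm u + norm v)"
    by (simp add: abs_mult)
  also have "\<dots> \<le> norm (u - v) * (norm (u - v) + 2 * norm v)"
    using diff by (intro mult_mono) auto
  finally show ?thesis .
qed

section \<open>The ideal output distribution\<close>

text \<open>The amplitude of \<open>psi\<close> with every \<open>U\<close> replaced by \<open>M\<close>; note \<open>n + 1 = m * D + 2\<close>.\<close>

definition psi_ideal :: "nat \<Rightarrow> real \<Rightarrow> nat \<Rightarrow> bool list \<Rightarrow> complex" where
  "psi_ideal m \<theta> D z = (1 / complex_of_real (sqrt 2)) ^ (m * D + 2) *
     ((\<Prod>k<D. cnj (M_amp m \<theta> 1 (block m k z))) * rotX_amp (z ! (m * D)) 1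
    + (\<Prod>k<D. cnj (M_amp m \<theta> (-1) (block m k z))) * rotX_amp (z ! (m * D)) (-1))"

lemma norm_inverse_sqrt2_power_sq: "(cmod ((1 / complex_of_real (sqrt 2)) ^ k))\<^sup>2 = (1/2) ^ k"
proof -
  have "(cmod ((1 / complex_of_real (sqrt 2)) ^ k))\<^sup>2 = ((1 / sqrt 2)\<^sup>2) ^ k"
    by (simp add: norm_power norm_divide power_mult[symmetric] mult.commute)
  then show ?thesis by (simp add: power_divide)
qed

lemma norm_add_mult_units_le:
  fixes x y u v :: "'a::real_normed_div_algebra"
  assumes "norm u = 1" "norm v = 1"
  shows "norm (x * u + y * v) \<le> norm x + norm y"
  using norm_triangle_ineq[of "x * u" "y * v"] assms by (simp add: norm_mult)

lemma P_psi_close_ideal: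
  assumes m: "m > 0" and n: "n = m * D + 1" and z: "length z = n"
    and small: "\<bar>sin \<theta>\<bar> ^ m \<le> 1/2"
  defines "\<eta> \<equiv> (1 + 4 * \<bar>sin \<theta>\<bar> ^ m) ^ D - 1"
  shows "\<bar>P_psi m \<theta> n z - (cmod (psi_ideal m \<theta> D z))\<^sup>2\<bar> \<le> (1/2) ^ (n - 1) * (\<eta> * (2 + \<eta>))"
proof -
  define \<kappa> :: complex where "\<kappa> = (1 / complex_of_real (sqrt 2)) ^ (n + 1)"
  define A where "A s = (\<Prod>k<D. adjU_amp m \<theta> s (block m k z))" for s
  define B where "B s = (\<Prod>k<D. cnj (M_amp m \<theta> s (block m k z)))" for s
  define h where "h s = rotX_amp (z ! (m * D)) s" for s
  have AB: "cmod (A s - B s) \<le> \<eta>" if "s = 1 \<or> s = -1" for s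
    unfolding A_def B_def \<eta>_def
    by (rule norm_prod_adjU_amp_diff_le[OF m _ that small]) (simp add: z n)
  have B: "cmod (B s) = 1" if "s = 1 \<or> s = -1" for s
    unfolding B_def prod_norm[symmetric] using norm_M_amp[OF m _ that] length_block z n by simp
  have h: "cmod (h 1) = 1" "cmod (h (-1)) = 1"
    by (simp_all add: h_def rotX_amp_1 rotX_amp_minus_1 norm_mult)
  have "psi m \<theta> n z = \<kappa> * (A 1 * h 1 + A (-1) * h (-1))"
    unfolding psi_eq_block_amps[OF m n z] A_def h_def \<kappa>_def ..
  moreover have ideal: "psi_ideal m \<theta> D z = \<kappa> * (B 1 * h 1 + B (-1) * h (-1))"
    unfolding psi_ideal_def B_def h_def \<kappa>_def n by (simp add: numeral_2_eq_2)
  ultimately have "psi m \<theta> n z - psi_ideal m \<theta> D z = \<kappa> * ((A 1 - B 1) * h 1 + (A (-1) - B (-1)) * h (-1))"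
    by (simp add: algebra_simps)
  then have close: "cmod (psi m \<theta> n z - psi_ideal m \<theta> D z) \<le> cmod \<kappa> * (2 * \<eta>)"
    using norm_add_mult_units_le[OF h, of "A 1 - B 1" "A (-1) - B (-1)"] AB[of 1] AB[of "-1"]
    by (simp add: norm_mult mult_left_mono)
  have bounded: "cmod (psi_ideal m \<theta> D z) \<le> cmod \<kappa> * 2"
    unfolding ideal using norm_add_mult_units_le[OF h, of "B 1" "B (-1)"] B[of 1] B[of "-1"]
    by (simp add: norm_mult mult_left_mono)
  have "0 \<le> \<eta>" using AB[of 1] by (meson norm_ge_zero order_trans)
  then have "\<bar>P_psi m \<theta> n z - (cmod (psi_ideal m \<theta> D z))\<^sup>2\<bar>
      \<le> (cmod \<kappa> * (2 * \<eta>)) * (cmod \<kappa> * (2 * \<eta>) + 2 * (cmod \<kappa> * 2))"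
    unfolding P_psi_def
    by (intro order_trans[OF abs_norm_square_diff_le] mult_mono add_mono close bounded order_refl) auto
  also have "\<dots> = 4 * (cmod \<kappa>)\<^sup>2 * (\<eta> * (2 + \<eta>))" by (simp add: algebra_simps power2_eq_square)
  also have "\<dots> = (1/2) ^ (n - 1) * (\<eta> * (2 + \<eta>))"
    unfolding \<kappa>_def norm_inverse_sqrt2_power_sq using n by (simp add: power_add)
  finally show ?thesis .
qed

lemma psi_ideal_snoc:
  assumes m: "m > 0" and x: "length x = m * D"
  defines "W \<equiv> weight x"
  shows "psi_ideal m \<theta> D (x @ [b]) = (1 / complex_of_real (sqrt 2)) ^ (m * D + 2) *
      (cis (real W * \<theta> - pi / 4) + (-1) ^ W * (if b then -1 else 1) * cis (- (real W * \<theta> - pi / 4)))"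
proof -
  have blocks: "block m k (x @ [b]) = block m k x" "length (block m k x) = m" if "k < D" for k
    using block_snoc[OF that x] length_block[OF that] x by simp_all
  have W: "(\<Sum>k<D. weight (block m k x)) = W"
    unfolding W_def by (rule sum_weight_blocks[OF x])
  have "(\<Prod>k<D. cnj (M_amp m \<theta> 1 (block m k (x @ [b])))) = (\<Prod>k<D. cis \<theta> ^ weight (block m k x))"
    by (intro prod.cong refl) (simp add: blocks M_amp_1[OF m] cis_cnj)
  also have "\<dots> = cis \<theta> ^ W" by (simp add: power_sum[symmetric] W)
  finally have plus: "(\<Prod>k<D. cnj (M_amp m \<theta> 1 (block m k (x @ [b])))) = cis (real W * \<theta>)"
    by (simp add: DeMoivre)
  have "(\<Prod>k<D. cnj (M_amp m \<theta> (-1) (block m k (x @ [b]))))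
      = (\<Prod>k<D. (-1) ^ weight (block m k x) * cis (-\<theta>) ^ weight (block m k x))"
    by (intro prod.cong refl) (simp add: blocks M_amp_minus_1[OF m] cis_cnj)
  also have "\<dots> = (-1) ^ W * cis (-\<theta>) ^ W" by (simp add: power_sum[symmetric] W prod.distrib)
  finally have minus: "(\<Prod>k<D. cnj (M_amp m \<theta> (-1) (block m k (x @ [b])))) = (-1) ^ W * cis (- (real W * \<theta>))"
    by (simp add: DeMoivre)
  have "(x @ [b]) ! (m * D) = b" using x by (metis nth_append_length)
  then show ?thesis
    unfolding psi_ideal_def plus minus rotX_amp_1 rotX_amp_minus_1
    by (simp add: cis_mult mult_ac)
qed

lemma norm_cis_add_sign_cis_sq:
  fixes \<tau> :: complex
  assumes "\<tau> = 1 \<or> \<tau> = -1"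
  shows "(cmod (cis \<phi> + \<tau> * cis (- \<phi>)))\<^sup>2 = 2 + 2 * Re \<tau> * cos (2 * \<phi>)"
  using assms
proof
  assume "\<tau> = 1"
  then have "cis \<phi> + \<tau> * cis (- \<phi>) = complex_of_real (2 * cos \<phi>)" by (simp add: complex_eq_iff)
  with \<open>\<tau> = 1\<close> show ?thesis by (simp add: power2_eq_square abs_mult_self_eq cos_double_cos)
next
  assume "\<tau> = -1"
  then have "cis \<phi> + \<tau> * cis (- \<phi>) = \<i> * complex_of_real (2 * sin \<phi>)" by (simp add: complex_eq_iff)
  with \<open>\<tau> = -1\<close> show ?thesis
    by (simp add: norm_mult power2_eq_square abs_mult_self_eq cos_double_sin)
qed

lemma norm_psi_ideal_snoc_sq:
  assumes m: "m > 0" and x: "length x = m * D"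
  shows "(cmod (psi_ideal m \<theta> D (x @ [b])))\<^sup>2 =
    (1/2) ^ (m * D + 1) * (1 + (if b = odd (weight x) then 1 else -1) * sin (2 * \<theta> * real (weight x)))"
proof -
  define W where "W = weight x"
  define \<tau> :: complex where "\<tau> = (-1) ^ W * (if b then -1 else 1)"
  have \<tau>: "\<tau> = 1 \<or> \<tau> = -1" "Re \<tau> = (if b = odd W then 1 else -1)"
    by (cases "even W"; auto simp: \<tau>_def)+
  have "(cmod (psi_ideal m \<theta> D (x @ [b])))\<^sup>2 =
      (1/2) ^ (m * D + 2) * (cmod (cis (real W * \<theta> - pi / 4) + \<tau> * cis (- (real W * \<theta> - pi / 4))))\<^sup>2"
    unfolding psi_ideal_snoc[OF m x] W_def[symmetric] \<tau>_def
    by (simp only: norm_mult power_mult_distrib norm_inverse_sqrt2_power_sq mult.assoc)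
  also have "(cmod (cis (real W * \<theta> - pi / 4) + \<tau> * cis (- (real W * \<theta> - pi / 4))))\<^sup>2
      = 2 + 2 * Re \<tau> * cos (2 * (real W * \<theta> - pi / 4))"
    by (rule norm_cis_add_sign_cis_sq[OF \<tau>(1)])
  also have "cos (2 * (real W * \<theta> - pi / 4)) = sin (2 * \<theta> * real W)"
    by (simp add: algebra_simps cos_diff)
  finally show ?thesis by (simp add: \<tau>(2) W_def algebra_simps)
qed

lemma sin_mod:
  assumes "p > 0"
  shows "sin (2 * (pi / real p) * real W) = sin (2 * pi * real (W mod p) / real p)"
proof -
  have "real W = real (W mod p) + real p * real (W div p)"
    by (metis mod_div_mult_eq of_nat_add of_nat_mult add.commute mult.commute)
  then have "2 * (pi / real p) * real W = 2 * pi * real (W mod p) / real p + 2 * pi * of_int (int (W div p))"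
    using assms by (simp add: field_simps)
  then show ?thesis by (simp only: sin_add sin_int_2pin cos_int_2pin)
qed

lemma sin_weight_sign:
  assumes "p > 0"
  shows "majmod p x \<Longrightarrow> sin (2 * (pi / real p) * real (weight x)) \<le> 0"
    and "\<not> majmod p x \<Longrightarrow> 0 \<le> sin (2 * (pi / real p) * real (weight x))"
proof -
  define r where "r = weight x mod p"
  have "real r < real p" using assms by (simp add: r_def)
  have s: "sin (2 * (pi / real p) * real (weight x)) = sin (2 * pi * real r / real p)"
    unfolding r_def by (rule sin_mod[OF assms])
  show "majmod p x \<Longrightarrow> sin (2 * (pi / real p) * real (weight x)) \<le> 0"
  proof -
    assume "majmod p x"
    then have "real p / 2 \<le> real r" by (simp add: majmod_def r_def)
    then have "pi \<le> 2 * pi * real r / real p" "2 * pi * real r / real p < 2 * pi"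
      using assms \<open>real r < real p\<close> by (simp_all add: field_simps)
    then show ?thesis unfolding s by (rule sin_le_zero)
  qed
  show "\<not> majmod p x \<Longrightarrow> 0 \<le> sin (2 * (pi / real p) * real (weight x))"
  proof -
    assume "\<not> majmod p x"
    then have "real r < real p / 2" by (simp add: majmod_def r_def)
    then have "0 \<le> 2 * pi * real r / real p" "2 * pi * real r / real p \<le> pi"
      using assms by (simp_all add: field_simps)
    then show ?thesis unfolding s by (rule sin_ge_zero)
  qed
qed

lemma sum_ideal_target_fibre:
  assumes m: "m > 0" and n: "n = m * D + 1" and p: "p > 0" and x: "length x = m * D"
  shows "(\<Sum>y\<in>bitstrings 1. \<bar>(cmod (psi_ideal m (pi / real p) D (x @ y)))\<^sup>2 - target_dist p n (x @ y)\<bar>)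
      = (1/2) ^ (m * D) * (1 - \<bar>sin (2 * (pi / real p) * real (weight x))\<bar>)"
proof -
  define sv where "sv = sin (2 * (pi / real p) * real (weight x))"
  define N where "N = m * D"
  have "\<bar>(cmod (psi_ideal m (pi / real p) D (x @ [b])))\<^sup>2 - target_dist p n (x @ [b])\<bar>
      = (1/2) ^ N * \<bar>(1 + (if b = odd (weight x) then 1 else -1) * sv) / 2
                     - (if b = (majmod p x \<noteq> parity x) then 1 else 0)\<bar>" for b
  proof -
    have "take N (x @ [b]) = x" "(x @ [b]) ! N = b" "n - 1 = N"
      using x n by (simp_all add: N_def nth_append)
    then have "target_dist p n (x @ [b]) = (1/2) ^ N * (if b = (majmod p x \<noteq> parity x) then 1 else 0)"
      unfolding target_dist_def Let_def by (auto simp: power_one_over)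
    moreover have "(cmod (psi_ideal m (pi / real p) D (x @ [b])))\<^sup>2
        = (1/2) ^ N * ((1 + (if b = odd (weight x) then 1 else -1) * sv) / 2)"
      using norm_psi_ideal_snoc_sq[OF m x] by (simp add: sv_def N_def)
    ultimately show ?thesis by (simp only: right_diff_distrib[symmetric] abs_mult) simp
  qed
  then have "(\<Sum>y\<in>bitstrings 1. \<bar>(cmod (psi_ideal m (pi / real p) D (x @ y)))\<^sup>2 - target_dist p n (x @ y)\<bar>)
      = (1/2) ^ N * (\<bar>(1 + (if odd (weight x) then 1 else -1) * sv) / 2 - (if majmod p x \<noteq> parity x then 1 else 0)\<bar>
          + \<bar>(1 + (if odd (weight x) then -1 else 1) * sv) / 2 - (if majmod p x \<noteq> parity x then 0 else 1)\<bar>)"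
    by (simp add: bitstrings_1 distrib_left)
  also have "\<dots> = (1/2) ^ N * (1 - \<bar>sv\<bar>)"
  proof -
    have "\<bar>sv\<bar> \<le> 1" by (simp add: sv_def)
    moreover have "majmod p x \<Longrightarrow> sv \<le> 0" "\<not> majmod p x \<Longrightarrow> 0 \<le> sv"
      using sin_weight_sign[OF p] by (simp_all add: sv_def)
    ultimately show ?thesis
      by (cases "majmod p x"; cases "odd (weight x)") (auto simp: parity_def abs_if field_simps)
  qed
  finally show ?thesis unfolding sv_def N_def .
qed

lemma sum_abs_ideal_target_diff:
  assumes m: "m > 0" and n: "n = m * D + 1" and p: "p > 0"
  shows "(\<Sum>z\<in>bitstrings n. \<bar>(cmod (psi_ideal m (pi / real p) D z))\<^sup>2 - target_dist p n z\<bar>)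
     = 1 - (1/2) ^ (n - 1) * (\<Sum>x\<in>bitstrings (n - 1). \<bar>sin (2 * (pi / real p) * real (weight x))\<bar>)"
proof -
  have "(\<Sum>z\<in>bitstrings n. \<bar>(cmod (psi_ideal m (pi / real p) D z))\<^sup>2 - target_dist p n z\<bar>)
      = (\<Sum>x\<in>bitstrings (m * D). (1/2) ^ (m * D) * (1 - \<bar>sin (2 * (pi / real p) * real (weight x))\<bar>))"
    unfolding n sum_bitstrings_add by (intro sum.cong refl sum_ideal_target_fibre[OF m _ p]) auto
  also have "\<dots> = (1/2) ^ (n - 1) * (\<Sum>x\<in>bitstrings (n - 1). 1 - \<bar>sin (2 * (pi / real p) * real (weight x))\<bar>)"
    using n by (simp add: sum_distrib_left)
  finally show ?thesis
    by (simp add: sum_subtractf card_bitstrings right_diff_distrib power_one_over)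
qed

section \<open>Equidistribution of the weight modulo p\<close>

lemma sum_cis_roots_of_unity:
  assumes p: "p > 0"
  shows "(\<Sum>k<p. cis (2 * pi * real k * (real j - real r) / real p))
           = (if j mod p = r mod p then of_nat p else 0)"
proof -
  define t where "t = real j - real r"
  define z where "z = cis (2 * pi * t / real p)"
  have t: "t = real_of_int (int j - int r)" by (simp add: t_def)
  have zk: "cis (2 * pi * real k * t / real p) = z ^ k" for k
    by (simp add: z_def DeMoivre algebra_simps)
  have "z ^ p = cis (2 * pi * t)" using p by (simp add: z_def DeMoivre)
  then have zp: "z ^ p = 1" unfolding t by simp
  have z1: "z = 1 \<longleftrightarrow> j mod p = r mod p"
  proof
    assume "z = 1"
    then have "cos (2 * pi * t / real p) = 1" by (simp add: z_def complex_eq_iff)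
    then obtain q :: int where "2 * pi * t / real p = real_of_int q * 2 * pi"
      by (auto simp: cos_one_2pi_int)
    then have "t = real_of_int q * real p" using p by (simp add: field_simps)
    then have "int j - int r = q * int p" unfolding t by (metis of_int_eq_iff of_int_mult of_int_of_nat_eq)
    then have "int j mod int p = int r mod int p" by (simp add: mod_eq_dvd_iff)
    then show "j mod p = r mod p" by (simp flip: of_nat_mod)
  next
    assume "j mod p = r mod p"
    then have "int j mod int p = int r mod int p" by (simp flip: of_nat_mod)
    then have "int p dvd (int j - int r)" by (simp add: mod_eq_dvd_iff)
    then obtain q where "int j = int r + int p * q" by (metis dvd_def diff_eq_eq add.commute)
    then have "2 * pi * t / real p = 2 * pi * real_of_int q" unfolding t using p by simp
    then show "z = 1" unfolding z_def by (simp add: cis_multiple_2pi)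
  qed
  show ?thesis
    by (simp add: zk t_def[symmetric] sum_gp_strict zp z1[symmetric])
qed

lemma sum_bitstrings_cis_weight:
  assumes "p > 0"
  shows "(\<Sum>x\<in>bitstrings N. cis (2 * pi * real k * (real (weight x) - real r) / real p))
           = cis (- (2 * pi * real k * real r / real p)) * (1 + cis (2 * pi * real k / real p)) ^ N"
proof -
  have "cis (2 * pi * real k * (real (weight x) - real r) / real p)
      = cis (- (2 * pi * real k * real r / real p)) * cis (2 * pi * real k / real p) ^ weight x" for x
  proof -
    have "2 * pi * real k * (real (weight x) - real r) / real p
        = - (2 * pi * real k * real r / real p) + real (weight x) * (2 * pi * real k / real p)"
      using assms by (simp add: field_simps)
    then show ?thesis by (simp add: DeMoivre cis_mult)
  qed
  then show ?thesis by (simp add: sum_distrib_left[symmetric] sum_bitstrings_power_weight)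
qed

lemma norm_1_plus_cis: "cmod (1 + cis \<phi>) = 2 * \<bar>cos (\<phi> / 2)\<bar>"
proof -
  have "(cmod (1 + cis \<phi>))\<^sup>2 = (1 + cos \<phi>)\<^sup>2 + (sin \<phi>)\<^sup>2"
    by (simp add: cmod_def)
  also have "\<dots> = 2 + 2 * cos \<phi>" by (simp add: power2_eq_square algebra_simps sin_squared_eq)
  also have "\<dots> = (2 * \<bar>cos (\<phi> / 2)\<bar>)\<^sup>2"
    using cos_double_cos[of "\<phi> / 2"] by (simp add: power2_eq_square)
  finally show ?thesis by (rule power2_eq_imp_eq) auto
qed

lemma abs_cos_multiple_le:
  assumes "1 \<le> k" "k < p"
  shows "\<bar>cos (pi * real k / real p)\<bar> \<le> cos (pi / real p)"
proof -
  have p: "real p > 0" using assms by simp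
  have a: "pi / real p \<le> pi * real k / real p" using assms p by (simp add: divide_right_mono)
  have b: "pi * real k / real p \<le> pi" using assms p by (simp add: field_simps)
  have "pi * (real k + 1) \<le> pi * real p" using assms by (intro mult_left_mono) auto
  then have c: "pi / real p \<le> pi - pi * real k / real p" using p by (simp add: field_simps)
  have "cos (pi * real k / real p) \<le> cos (pi / real p)"
    by (rule cos_monotone_0_pi_le) (use a b p in auto)
  moreover have "cos (pi - pi * real k / real p) \<le> cos (pi / real p)"
    by (rule cos_monotone_0_pi_le) (use c b p in auto)
  ultimately show ?thesis by (simp add: cos_pi_minus abs_if)
qed

lemma cos_pi_div_nonneg:
  assumes "p \<ge> 2"
  shows "0 \<le> cos (pi / real p)"
proof -
  have "pi / real p \<le> pi / 2" using assms by (intro divide_left_mono) auto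
  moreover have "0 \<le> pi / real p" by simp
  ultimately show ?thesis by (intro cos_ge_zero) linarith+
qed

lemma card_weight_mod_ge:
  assumes p: "p \<ge> 2" and r: "r < p"
  shows "real (card {x \<in> bitstrings N. weight x mod p = r}) \<ge> 2 ^ N * (1 / real p - cos (pi / real p) ^ N)"
proof -
  have p0: "p > 0" using p by simp
  define c where "c k = cis (- (2 * pi * real k * real r / real p)) * (1 + cis (2 * pi * real k / real p)) ^ N" for k
  have "real p * real (card {x \<in> bitstrings N. weight x mod p = r})
      = (\<Sum>x\<in>bitstrings N. if weight x mod p = r then real p else 0)"
    by (simp add: sum.If_cases Int_def)
  also have "\<dots> = (\<Sum>x\<in>bitstrings N. Re (\<Sum>k<p. cis (2 * pi * real k * (real (weight x) - real r) / real p)))"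
    by (intro sum.cong refl) (simp add: sum_cis_roots_of_unity[OF p0] r)
  also have "\<dots> = Re (\<Sum>k<p. c k)"
    by (simp only: Re_sum[symmetric]) (subst sum.swap, simp add: c_def sum_bitstrings_cis_weight[OF p0])
  also have "\<dots> = 2 ^ N + Re (\<Sum>k\<in>{1..<p}. c k)"
    using p0 by (simp add: lessThan_atLeast0 sum.atLeast_Suc_lessThan c_def)
  finally have eq: "real p * real (card {x \<in> bitstrings N. weight x mod p = r}) = 2 ^ N + Re (\<Sum>k\<in>{1..<p}. c k)" .
  have "cmod (c k) \<le> (2 * cos (pi / real p)) ^ N" if "k \<in> {1..<p}" for k
  proof -
    have "cmod (c k) = (2 * \<bar>cos (pi * real k / real p)\<bar>) ^ N"
      by (simp add: c_def norm_mult norm_power norm_1_plus_cis)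
    also have "\<dots> \<le> (2 * cos (pi / real p)) ^ N"
      using abs_cos_multiple_le[of k p] that by (intro power_mono) auto
    finally show ?thesis .
  qed
  then have "(\<Sum>k\<in>{1..<p}. cmod (c k)) \<le> (\<Sum>k\<in>{1..<p}. (2 * cos (pi / real p)) ^ N)"
    by (rule sum_mono)
  moreover have "- Re (\<Sum>k\<in>{1..<p}. c k) \<le> (\<Sum>k\<in>{1..<p}. cmod (c k))"
    using abs_Re_le_cmod[of "\<Sum>k\<in>{1..<p}. c k"] norm_sum[of c "{1..<p}"] by linarith
  ultimately have "- Re (\<Sum>k\<in>{1..<p}. c k) \<le> (\<Sum>k\<in>{1..<p}. (2 * cos (pi / real p)) ^ N)"
    by linarith
  also have "\<dots> \<le> real p * (2 ^ N * cos (pi / real p) ^ N)"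
    using cos_pi_div_nonneg[OF p] by (simp add: power_mult_distrib mult_right_mono)
  finally have "real p * real (card {x \<in> bitstrings N. weight x mod p = r}) \<ge> real p * (2 ^ N * (1 / real p - cos (pi / real p) ^ N))"
    using eq p0 by (simp add: algebra_simps)
  then show ?thesis using p0 by simp
qed

section \<open>The average of |sin (2 pi r / p)| over residues\<close>

lemma sin_half_mult_sum_sin:
  "2 * sin (a / 2) * (\<Sum>r\<in>{1..h}. sin (real r * a)) = cos (a / 2) - cos ((real h + 1/2) * a)"
proof (induction h)
  case 0 then show ?case by simp
next
  case (Suc h)
  have "2 * sin (a / 2) * sin (real (Suc h) * a) = cos (a / 2 - real (Suc h) * a) - cos (a / 2 + real (Suc h) * a)"
    by (subst mult.assoc, subst sin_times_sin) simp
  also have "cos (a / 2 - real (Suc h) * a) = cos ((real h + 1/2) * a)"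
  proof -
    have "a / 2 - real (Suc h) * a = - ((real h + 1/2) * a)" by (simp add: algebra_simps)
    then show ?thesis by (simp only: cos_minus)
  qed
  finally have "2 * sin (a / 2) * sin (real (Suc h) * a) = cos ((real h + 1/2) * a) - cos ((real (Suc h) + 1/2) * a)"
    by (simp add: algebra_simps)
  then show ?case using Suc by (simp add: distrib_left)
qed

lemma cos_ge_1_minus_square_half: "0 \<le> x \<Longrightarrow> x \<le> pi \<Longrightarrow> 1 - x\<^sup>2 / 2 \<le> cos x"
proof -
  assume x: "0 \<le> x" "x \<le> pi"
  have "0 \<le> sin (x / 2)" by (rule sin_ge_zero) (use x in auto)
  moreover have "sin (x / 2) \<le> x / 2" by (rule sin_x_le_x) (use x in auto)
  ultimately have "(sin (x / 2))\<^sup>2 \<le> (x / 2)\<^sup>2" by (rule power_mono[rotated])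
  moreover have "cos x = 1 - 2 * (sin (x / 2))\<^sup>2" using cos_double_sin[of "x / 2"] by simp
  ultimately show ?thesis by (simp add: power2_eq_square)
qed

text \<open>By the symmetry \<open>r \<mapsto> p - r\<close>, the sum is twice a sum of sines over the first half-turn.\<close>

lemma sum_abs_sin_residues_ge:
  assumes "odd p"
  shows "2 * (\<Sum>r\<in>{1..p div 2}. sin (real r * (2 * pi / real p))) \<le> (\<Sum>r<p. \<bar>sin (2 * pi * real r / real p)\<bar>)"
proof -
  define h where "h = p div 2"
  have ph: "p = 2 * h + 1" using assms by (simp add: h_def)
  define f where "f r = \<bar>sin (2 * pi * real r / real p)\<bar>" for r
  have disj: "{1..h} \<inter> (\<lambda>r. p - r) ` {1..h} = {}" using ph by auto
  have sub: "{1..h} \<union> (\<lambda>r. p - r) ` {1..h} \<subseteq> {..<p}" using ph by auto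
  have inj: "inj_on (\<lambda>r. p - r) {1..h}" using ph by (auto simp: inj_on_def)
  have reflect: "f (p - r) = f r" if "r \<in> {1..h}" for r
  proof -
    have "2 * pi * real (p - r) / real p = 2 * pi - 2 * pi * real r / real p"
      using that ph by (simp add: of_nat_diff field_simps)
    then show ?thesis by (simp add: f_def sin_2pi_minus)
  qed
  have pos: "f r = sin (real r * (2 * pi / real p))" if "r \<in> {1..h}" for r
  proof -
    have "pi * (2 * real r) \<le> pi * real p" using that ph by (intro mult_left_mono) auto
    then have "2 * pi * real r / real p \<le> pi" using ph by (simp add: field_simps)
    then have "0 \<le> sin (2 * pi * real r / real p)" by (intro sin_ge_zero) auto
    then show ?thesis by (simp add: f_def mult_ac)
  qed
  have "(\<Sum>r\<in>{1..h} \<union> (\<lambda>r. p - r) ` {1..h}. f r) = (\<Sum>r\<in>{1..h}. f r) + (\<Sum>r\<in>(\<lambda>r. p - r) ` {1..h}. f r)"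
    by (rule sum.union_disjoint) (use disj in auto)
  also have "(\<Sum>r\<in>(\<lambda>r. p - r) ` {1..h}. f r) = (\<Sum>r\<in>{1..h}. f r)"
    by (subst sum.reindex[OF inj]) (auto intro: sum.cong simp: reflect)
  also have "(\<Sum>r\<in>{1..h}. f r) = (\<Sum>r\<in>{1..h}. sin (real r * (2 * pi / real p)))"
    by (rule sum.cong) (auto simp: pos)
  finally have "(\<Sum>r\<in>{1..h} \<union> (\<lambda>r. p - r) ` {1..h}. f r) = 2 * (\<Sum>r\<in>{1..h}. sin (real r * (2 * pi / real p)))"
    by simp
  moreover have "(\<Sum>r\<in>{1..h} \<union> (\<lambda>r. p - r) ` {1..h}. f r) \<le> (\<Sum>r<p. f r)"
    by (rule sum_mono2) (use sub in \<open>auto simp: f_def\<close>)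
  ultimately show ?thesis unfolding f_def h_def by simp
qed

lemma sum_abs_sin_residues_lower_bound:
  assumes "odd p" "p \<ge> 3"
  shows "2 * real p / pi - 1 \<le> (\<Sum>r<p. \<bar>sin (2 * pi * real r / real p)\<bar>)"
proof -
  define x where "x = pi / real p"
  have "pi / real p \<le> pi / 2" using assms by (intro divide_left_mono) auto
  then have x: "0 < x" "x \<le> pi / 2" using assms by (simp_all add: x_def)
  have sin_x: "0 < sin x" "sin x \<le> x"
    using x sin_gt_zero[of x] sin_x_le_x[of x] pi_gt_zero by linarith+
  have "real p = 2 * real (p div 2) + 1"
    using arg_cong[OF odd_two_times_div_two_succ[OF assms(1)], of real] by simp
  then have "(real (p div 2) + 1/2) * (2 * pi / real p) = pi"
    using assms by (simp add: field_simps)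
  then have "2 * sin x * (\<Sum>r\<in>{1..p div 2}. sin (real r * (2 * pi / real p))) = cos x + 1"
    using sin_half_mult_sum_sin[of "2 * pi / real p" "p div 2"] by (simp add: x_def)
  then have "2 * (\<Sum>r\<in>{1..p div 2}. sin (real r * (2 * pi / real p))) = (1 + cos x) / sin x"
    using sin_x by (simp add: field_simps)
  also have "(1 + cos x) / x \<le> (1 + cos x) / sin x"
  proof (rule divide_left_mono)
    show "0 \<le> 1 + cos x" using cos_ge_minus_one[of x] by linarith
  qed (use sin_x in auto)
  also have "(2 - x\<^sup>2 / 2) / x \<le> (1 + cos x) / x"
    using cos_ge_1_minus_square_half[of x] x by (intro divide_right_mono) auto
  also have "(2 - x\<^sup>2 / 2) / x = 2 * real p / pi - x / 2"
    using x assms by (simp add: x_def field_simps power2_eq_square)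
  finally show ?thesis
    using sum_abs_sin_residues_ge[OF assms(1)] x pi_less_4 by linarith
qed

lemma mean_abs_sin_weight_ge:
  assumes p: "odd p" "p \<ge> 3"
  shows "2 / pi - 1 / real p - real p * cos (pi / real p) ^ N
     \<le> (1/2) ^ N * (\<Sum>x\<in>bitstrings N. \<bar>sin (2 * (pi / real p) * real (weight x))\<bar>)"
proof -
  have p0: "p > 0" using p by simp
  define f where "f r = \<bar>sin (2 * pi * real r / real p)\<bar>" for r
  define S where "S = (\<Sum>r<p. f r)"
  define c where "c = cos (pi / real p) ^ N"
  have c0: "0 \<le> c" using cos_pi_div_nonneg[of p] p by (simp add: c_def)
  have S: "2 * real p / pi - 1 \<le> S" "S \<le> real p"
    using sum_abs_sin_residues_lower_bound[OF p] sum_mono[of "{..<p}" f "\<lambda>_. 1"]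
    by (simp_all add: S_def f_def)
  have "(\<Sum>x\<in>bitstrings N. \<bar>sin (2 * (pi / real p) * real (weight x))\<bar>) = (\<Sum>x\<in>bitstrings N. f (weight x mod p))"
    by (intro sum.cong refl) (simp only: f_def sin_mod[OF p0])
  also have "\<dots> = (\<Sum>r<p. f r * real (card {x \<in> bitstrings N. weight x mod p = r}))"
    by (rule sum_mod_eq_sum_residues[OF p0]) simp
  also have "\<dots> \<ge> (\<Sum>r<p. f r * (2 ^ N * (1 / real p - c)))"
    by (intro sum_mono mult_left_mono) (use card_weight_mod_ge[of p] p in \<open>auto simp: c_def f_def\<close>)
  also have "(\<Sum>r<p. f r * (2 ^ N * (1 / real p - c))) = S * (2 ^ N * (1 / real p - c))"
    by (simp add: S_def sum_distrib_right)
  also have "\<dots> = 2 ^ N * (S / real p - c * S)"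
    by (simp add: algebra_simps)
  finally have "2 ^ N * (S / real p - c * S) \<le> (\<Sum>x\<in>bitstrings N. \<bar>sin (2 * (pi / real p) * real (weight x))\<bar>)" .
  then have "S / real p - c * S \<le> (1/2) ^ N * (\<Sum>x\<in>bitstrings N. \<bar>sin (2 * (pi / real p) * real (weight x))\<bar>)"
    by (simp add: power_one_over field_simps)
  moreover have "2 / pi - 1 / real p - real p * c \<le> S / real p - c * S"
  proof -
    have "(2 * real p / pi - 1) / real p \<le> S / real p" using S(1) by (rule divide_right_mono) simp
    moreover have "(2 * real p / pi - 1) / real p = 2 / pi - 1 / real p" using p0 by (simp add: field_simps)
    ultimately have "2 / pi - 1 / real p \<le> S / real p" by simp
    moreover have "c * S \<le> c * real p" using S(2) c0 by (rule mult_left_mono)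
    ultimately show ?thesis by (simp add: mult.commute)
  qed
  ultimately show ?thesis unfolding c_def by linarith
qed

section \<open>The distance bound\<close>

lemma tvd_P_psi_le:
  assumes m: "m > 0" and n: "n = m * D + 1" and p: "odd p" "p \<ge> 3"
    and small: "\<bar>sin (pi / real p)\<bar> ^ m \<le> 1/2"
  defines "\<eta> \<equiv> (1 + 4 * \<bar>sin (pi / real p)\<bar> ^ m) ^ D - 1"
  shows "tvd (bitstrings n) (P_psi m (pi / real p) n) (target_dist p n)
    \<le> 1/2 - 1/pi + 1 / (2 * real p) + real p * cos (pi / real p) ^ (n - 1) / 2 + \<eta> * (2 + \<eta>)"
proof -
  define P where "P = P_psi m (pi / real p) n"
  define P0 where "P0 z = (cmod (psi_ideal m (pi / real p) D z))\<^sup>2" for z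
  define Q where "Q = target_dist p n"
  have "(\<Sum>z\<in>bitstrings n. \<bar>P z - P0 z\<bar>) \<le> (\<Sum>z\<in>bitstrings n. (1/2) ^ (n - 1) * (\<eta> * (2 + \<eta>)))"
    by (rule sum_mono) (use P_psi_close_ideal[OF m n _ small] in \<open>simp add: P_def P0_def \<eta>_def\<close>)
  also have "\<dots> = 2 * (\<eta> * (2 + \<eta>))"
  proof -
    have "real (2 ^ n) * (1/2) ^ (n - 1) = (2::real)" using n by (simp add: power_one_over)
    then show ?thesis by (simp add: card_bitstrings mult.assoc[symmetric])
  qed
  finally have ideal_close: "(\<Sum>z\<in>bitstrings n. \<bar>P z - P0 z\<bar>) \<le> 2 * (\<eta> * (2 + \<eta>))" .
  have "(\<Sum>z\<in>bitstrings n. \<bar>P0 z - Q z\<bar>)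
      = 1 - (1/2) ^ (n - 1) * (\<Sum>x\<in>bitstrings (n - 1). \<bar>sin (2 * (pi / real p) * real (weight x))\<bar>)"
    unfolding P0_def Q_def by (rule sum_abs_ideal_target_diff[OF m n]) (use p in simp)
  also have "\<dots> \<le> 1 - (2 / pi - 1 / real p - real p * cos (pi / real p) ^ (n - 1))"
    using mean_abs_sin_weight_ge[OF p, of "n - 1"] by linarith
  finally have ideal_target: "(\<Sum>z\<in>bitstrings n. \<bar>P0 z - Q z\<bar>)
      \<le> 1 - (2 / pi - 1 / real p - real p * cos (pi / real p) ^ (n - 1))" .
  have "(\<Sum>z\<in>bitstrings n. \<bar>P z - Q z\<bar>) \<le> (\<Sum>z\<in>bitstrings n. \<bar>P z - P0 z\<bar>) + (\<Sum>z\<in>bitstrings n. \<bar>P0 z - Q z\<bar>)"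
    unfolding sum.distrib[symmetric] by (rule sum_mono) linarith
  then have "tvd (bitstrings n) P Q
      \<le> (2 * (\<eta> * (2 + \<eta>)) + (1 - (2 / pi - 1 / real p - real p * cos (pi / real p) ^ (n - 1)))) / 2"
    unfolding tvd_def using ideal_close ideal_target by (intro divide_right_mono) auto
  also have "\<dots> = 1/2 - 1/pi + 1 / (2 * real p) + real p * cos (pi / real p) ^ (n - 1) / 2 + \<eta> * (2 + \<eta>)"
    by (simp add: field_simps)
  finally show ?thesis unfolding P_def Q_def .
qed

lemma cos_le_1_minus_square_div_8:
  fixes x :: real
  assumes x: "0 \<le> x" "x \<le> 2"
  shows "cos x \<le> 1 - x\<^sup>2 / 8"
proof -
  define y where "y = x / 2"
  have y: "0 \<le> y" "y \<le> 1" using x by (simp_all add: y_def)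
  have "\<bar>sin y - (\<Sum>m<3. sin_coeff m * y ^ m)\<bar> \<le> inverse (fact 3) * \<bar>y\<bar> ^ 3"
    by (rule Maclaurin_sin_bound)
  moreover have "(\<Sum>m<3. sin_coeff m * y ^ m) = y"
    by (simp add: eval_nat_numeral sin_coeff_def)
  moreover have "inverse (fact 3) * \<bar>y\<bar> ^ 3 = y ^ 3 / 6"
    using y by (simp add: eval_nat_numeral field_simps)
  moreover have "y ^ 3 \<le> y"
    using y by (simp add: power3_eq_cube mult_le_one mult_left_le_one_le)
  ultimately have "y / 2 \<le> sin y" by linarith
  then have "(y / 2)\<^sup>2 \<le> (sin y)\<^sup>2" using y by (intro power_mono) auto
  moreover have "cos x = 1 - 2 * (sin y)\<^sup>2" using cos_double_sin[of y] by (simp add: y_def)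
  ultimately show ?thesis by (simp add: y_def power2_eq_square)
qed

lemma cos_pi_div_power_le_exp:
  assumes "p \<ge> 2"
  shows "cos (pi / real p) ^ N \<le> exp (- real N / (2 * (real p)\<^sup>2))"
proof -
  have "pi / real p \<le> pi / 2" using assms by (intro divide_left_mono) auto
  then have x: "0 \<le> pi / real p" "pi / real p \<le> 2" using pi_less_4 by (simp, linarith)
  have "4 \<le> pi\<^sup>2" using pi_ge_two mult_mono[OF pi_ge_two pi_ge_two] by (simp add: power2_eq_square)
  then have "1 / (2 * (real p)\<^sup>2) \<le> (pi / real p)\<^sup>2 / 8"
    using assms by (simp add: field_simps power2_eq_square)
  then have "cos (pi / real p) \<le> 1 + (- 1 / (2 * (real p)\<^sup>2))"
    using cos_le_1_minus_square_div_8[OF x] by linarith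
  also have "\<dots> \<le> exp (- 1 / (2 * (real p)\<^sup>2))" by (rule exp_ge_add_one_self)
  finally have "cos (pi / real p) ^ N \<le> exp (- 1 / (2 * (real p)\<^sup>2)) ^ N"
    using cos_pi_div_nonneg[OF assms] by (intro power_mono)
  also have "\<dots> = exp (- real N / (2 * (real p)\<^sup>2))"
    by (simp add: exp_of_nat_mult[symmetric])
  finally show ?thesis .
qed

lemma pi_div_cos_power_term_le:
  assumes p: "p \<ge> 2" and B: "(real p)\<^sup>2 \<le> B" "B * exp (- real N / (2 * B)) \<le> 1"
  shows "real p * cos (pi / real p) ^ N / 2 \<le> 1 / (2 * real p)"
proof -
  have p0: "0 < (real p)\<^sup>2" using p by simp
  with B(1) have B0: "0 < B" by linarith
  have "real N / (2 * B) \<le> real N / (2 * (real p)\<^sup>2)"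
  proof (rule divide_left_mono)
    show "0 < 2 * B * (2 * (real p)\<^sup>2)" using B0 p0 by simp
  qed (use B(1) in auto)
  then have "(real p)\<^sup>2 * cos (pi / real p) ^ N \<le> B * exp (- real N / (2 * B))"
    using cos_pi_div_power_le_exp[OF p, of N] cos_pi_div_nonneg[OF p] B(1) B0
    by (intro mult_mono) (auto intro: order_trans)
  with B(2) have "(real p)\<^sup>2 * cos (pi / real p) ^ N \<le> 1" by linarith
  then show ?thesis using p by (simp add: field_simps power2_eq_square)
qed

lemma one_plus_power_minus_one_le:
  fixes \<delta> t :: real
  assumes "0 \<le> \<delta>" "real D * \<delta> \<le> t" "t \<le> 1/2"
  shows "(1 + \<delta>) ^ D - 1 \<le> 2 * t"
proof -
  have "(1 + \<delta>) ^ D \<le> exp \<delta> ^ D" using assms(1) by (intro power_mono) (auto simp: exp_ge_add_one_self)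
  also have "\<dots> = exp (real D * \<delta>)" by (simp add: exp_of_nat_mult)
  also have "\<dots> \<le> 1 + 2 * (real D * \<delta>)" using assms by (intro real_exp_bound_lemma) auto
  finally show ?thesis using assms(2) by linarith
qed

section \<open>Choice of the parameters\<close>

lemma abs_sin_pi_div_power_le:
  fixes c c1 :: real
  assumes c: "0 < c" "1 + c \<le> c * real m" and c1: "0 < c1" and n: "1 \<le> n"
    and lo: "c1 * real n powr c \<le> real p"
  shows "\<bar>sin (pi / real p)\<bar> ^ m \<le> (pi / c1) ^ m / (real n * real n powr c)"
proof -
  have nc: "0 < real n powr c" using n by simp
  with c1 have "0 < c1 * real n powr c" by simp
  with lo have p: "0 < real p" by linarith
  have "\<bar>sin (pi / real p)\<bar> ^ m \<le> (pi / real p) ^ m"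
    using abs_sin_x_le_abs_x[of "pi / real p"] p by (intro power_mono) auto
  also have "\<dots> \<le> (pi / (c1 * real n powr c)) ^ m"
    using lo c1 nc p by (intro power_mono divide_left_mono) auto
  also have "\<dots> = (pi / c1) ^ m / real n powr (real m * c)"
    using n by (simp add: power_divide power_mult_distrib powr_power)
  also have "\<dots> \<le> (pi / c1) ^ m / (real n * real n powr c)"
  proof (rule divide_left_mono)
    have "real n powr (1 + c) \<le> real n powr (real m * c)"
      using n c by (intro powr_mono) (auto simp: mult.commute)
    then show "real n * real n powr c \<le> real n powr (real m * c)" using n by (simp add: powr_add)
  qed (use c1 n nc in auto)
  finally show ?thesis .
qed

lemma correction_term_le:
  fixes c c1 c2 :: real
  assumes c: "0 < c" "1 + c \<le> c * real m" and c1: "0 < c1" and n: "n = m * D + 1"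
    and lo: "c1 * real n powr c \<le> real p" and hi: "real p \<le> c2 * real n powr c"
    and large: "4 * (pi / c1) ^ m * real n powr (-c) \<le> 1/2"
  defines "\<eta> \<equiv> (1 + 4 * \<bar>sin (pi / real p)\<bar> ^ m) ^ D - 1"
  shows "\<eta> * (2 + \<eta>) \<le> 6 * (4 * (pi / c1) ^ m * c2 / real p)"
proof -
  define K where "K = 4 * (pi / c1) ^ m"
  define t where "t = K * real n powr (-c)"
  define \<delta> where "\<delta> = 4 * \<bar>sin (pi / real p)\<bar> ^ m"
  have n1: "1 \<le> real n" using n by simp
  then have nc: "0 < real n powr c" and "real n \<noteq> 0" by simp_all
  from c1 nc have "0 < c1 * real n powr c" by simp
  with lo have p: "0 < real p" by linarith
  have "D \<le> m * D" using c by (cases m) auto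
  then have "D \<le> n" using n by linarith
  then have "real D \<le> real n" by simp
  moreover have "\<delta> \<le> K / (real n * real n powr c)"
    using abs_sin_pi_div_power_le[OF c c1 _ lo] n1 by (simp add: \<delta>_def K_def)
  moreover have "0 \<le> \<delta>" by (simp add: \<delta>_def)
  ultimately have "real D * \<delta> \<le> real n * (K / (real n * real n powr c))"
    by (intro mult_mono) auto
  also have "\<dots> = t" using \<open>real n \<noteq> 0\<close> nc by (simp add: t_def powr_minus_divide field_simps)
  finally have "\<eta> \<le> 2 * t"
    unfolding \<eta>_def \<delta>_def[symmetric]
    by (intro one_plus_power_minus_one_le) (use large in \<open>auto simp: \<delta>_def t_def K_def\<close>)
  moreover have "0 \<le> \<eta>" unfolding \<eta>_def by simp
  moreover have "t \<le> 1/2" using large by (simp add: t_def K_def)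
  ultimately have "\<eta> * (2 + \<eta>) \<le> \<eta> * 3" by (intro mult_left_mono) auto
  with \<open>\<eta> \<le> 2 * t\<close> have "\<eta> * (2 + \<eta>) \<le> 6 * t" by linarith
  also have "t \<le> K * c2 / real p"
  proof -
    have "real n powr (-c) \<le> c2 / real p"
      using hi nc p by (simp add: powr_minus_divide field_simps mult.commute)
    then have "K * real n powr (-c) \<le> K * (c2 / real p)"
      using c1 by (intro mult_left_mono) (simp_all add: K_def)
    then show ?thesis by (simp add: t_def)
  qed
  finally show ?thesis unfolding K_def by simp
qed

lemma tvd_P_psi_le_parameters:
  fixes c c1 c2 :: real
  assumes c: "0 < c" "1 + c \<le> c * real m" and c1: "0 < c1" and m: "m > 0"
    and n: "n = m * D + 1" and "prime p"
    and lo: "c1 * real n powr c \<le> real p" and hi: "real p \<le> c2 * real n powr c"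
    and large: "8 \<le> c1 * real n powr c" "4 * (pi / c1) ^ m * real n powr (-c) \<le> 1/2"
      "c2\<^sup>2 * real n powr (2 * c) * exp (- real (n - 1) / (2 * (c2\<^sup>2 * real n powr (2 * c)))) \<le> 1"
  shows "tvd (bitstrings n) (P_psi m (pi / real p) n) (target_dist p n)
           \<le> 1/2 - 1/pi + (1 + 24 * (pi / c1) ^ m * c2) / real p"
proof -
  have "n \<noteq> 0" using n by simp
  have p: "8 \<le> real p" using lo large(1) by linarith
  then have "3 \<le> p" by simp
  then have "odd p" using prime_odd_nat[OF \<open>prime p\<close>] by auto
  have "\<bar>sin (pi / real p)\<bar> \<le> pi / real p" using abs_sin_x_le_abs_x[of "pi / real p"] by simp
  also have "pi / real p \<le> pi / 8" using p by (intro divide_left_mono) auto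
  finally have "\<bar>sin (pi / real p)\<bar> \<le> 1/2" using pi_less_4 by linarith
  moreover have "\<bar>sin (pi / real p)\<bar> ^ m \<le> \<bar>sin (pi / real p)\<bar> ^ 1"
    using m \<open>\<bar>sin (pi / real p)\<bar> \<le> 1/2\<close> by (intro power_decreasing) auto
  ultimately have "\<bar>sin (pi / real p)\<bar> ^ m \<le> 1/2" by simp
  note bound = tvd_P_psi_le[OF m n \<open>odd p\<close> \<open>3 \<le> p\<close> this]
  have "(real p)\<^sup>2 \<le> (c2 * real n powr c)\<^sup>2" using hi p by (intro power_mono) auto
  also have "(real n powr c)\<^sup>2 = real n powr (of_nat 2 * c)"
    by (rule powr_power) (use \<open>n \<noteq> 0\<close> in simp)
  then have "(c2 * real n powr c)\<^sup>2 = c2\<^sup>2 * real n powr (2 * c)"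
    by (simp add: power_mult_distrib)
  finally have "(real p)\<^sup>2 \<le> c2\<^sup>2 * real n powr (2 * c)" .
  then have "real p * cos (pi / real p) ^ (n - 1) / 2 \<le> 1 / (2 * real p)"
    using large(3) p by (intro pi_div_cos_power_term_le) auto
  moreover have "(1 + 24 * (pi / c1) ^ m * c2) / real p
      = 1 / (2 * real p) + 1 / (2 * real p) + 6 * (4 * (pi / c1) ^ m * c2 / real p)"
    using p by (simp add: field_simps)
  ultimately show ?thesis
    using bound correction_term_le[OF c c1 n lo hi large(2)] by linarith
qed

lemma ceiling_inverse_plus_one:
  fixes c :: real
  assumes "0 < c"
  defines "m \<equiv> nat \<lceil>1 / c + 1\<rceil>"
  shows "m > 0" and "1 + c \<le> c * real m"
proof -
  have ceil: "1 / c + 1 \<le> real_of_int \<lceil>1 / c + 1\<rceil>" by (rule le_of_int_ceiling)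
  moreover have "0 < 1 / c + 1" using assms by (simp add: add_pos_pos)
  ultimately have "0 \<le> \<lceil>1 / c + 1\<rceil>" by linarith
  then have "real m = real_of_int \<lceil>1 / c + 1\<rceil>" by (simp add: m_def)
  with ceil have "1 / c + 1 \<le> real m" by simp
  with \<open>0 < 1 / c + 1\<close> show "m > 0" by linarith
  have "c * (1 / c + 1) \<le> c * real m" using \<open>1 / c + 1 \<le> real m\<close> assms by (intro mult_left_mono) auto
  moreover have "c * (1 / c + 1) = 1 + c" using assms by (simp add: distrib_left)
  ultimately show "1 + c \<le> c * real m" by linarith
qed

lemma eventually_parameters_large:
  fixes c c1 c2 K :: real
  assumes "0 < c" "c < 1/2" "0 < c1" "0 < c2"
  shows "eventually (\<lambda>n. 8 \<le> c1 * real n powr c \<and> K * real n powr (-c) \<le> 1/2 \<and>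
      c2\<^sup>2 * real n powr (2 * c) * exp (- real (n - 1) / (2 * (c2\<^sup>2 * real n powr (2 * c)))) \<le> 1) sequentially"
proof (intro eventually_conj)
  have "filterlim (\<lambda>n::nat. c1 * real n powr c) at_top sequentially"
    using assms by real_asymp
  then show "eventually (\<lambda>n. 8 \<le> c1 * real n powr c) sequentially"
    by (simp add: filterlim_at_top)
  have "(\<lambda>n::nat. K * real n powr (-c)) \<longlonglongrightarrow> 0"
    using assms by real_asymp
  from order_tendstoD(2)[OF this, of "1/2"]
  show "eventually (\<lambda>n. K * real n powr (-c) \<le> 1/2) sequentially"
    by (auto elim: eventually_mono)
  have "(\<lambda>n::nat. c2\<^sup>2 * real n powr (2 * c) * exp (- real (n - 1) / (2 * (c2\<^sup>2 * real n powr (2 * c))))) \<longlonglongrightarrow> 0"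
    using assms by real_asymp
  from order_tendstoD(2)[OF this, of 1]
  show "eventually (\<lambda>n. c2\<^sup>2 * real n powr (2 * c) * exp (- real (n - 1) / (2 * (c2\<^sup>2 * real n powr (2 * c)))) \<le> 1) sequentially"
    by (auto elim: eventually_mono)
qed

theorem theorem4p11:
  fixes c c1 c2 :: real
  assumes "0 < c" "c < 1/2" "0 < c1" "c1 \<le> c2"
  shows "\<exists>C>0. \<exists>n0::nat. \<forall>(n::nat) (p::nat).
           (let m = nat \<lceil>1 / c + 1\<rceil> in
             n \<ge> n0 \<longrightarrow> m dvd (n - 1) \<longrightarrow> prime p \<longrightarrow>
             c1 * real n powr c \<le> real p \<longrightarrow> real p \<le> c2 * real n powr c \<longrightarrow>
             tvd (bitstrings n) (P_psi m (pi / real p) n) (target_dist p n)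
               \<le> 1/2 - 1/pi + C / real p)"
proof -
  define m where "m = nat \<lceil>1 / c + 1\<rceil>"
  note m = ceiling_inverse_plus_one[OF assms(1), folded m_def]
  define C where "C = 1 + 24 * (pi / c1) ^ m * c2"
  have "C > 0" using assms by (simp add: C_def add_pos_nonneg)
  obtain n0 where n0: "\<And>n. n \<ge> n0 \<Longrightarrow> 8 \<le> c1 * real n powr c \<and> 4 * (pi / c1) ^ m * real n powr (-c) \<le> 1/2 \<and>
      c2\<^sup>2 * real n powr (2 * c) * exp (- real (n - 1) / (2 * (c2\<^sup>2 * real n powr (2 * c)))) \<le> 1"
    using eventually_parameters_large[of c c1 c2 "4 * (pi / c1) ^ m"] assms
    by (auto simp: eventually_sequentially)
  have "tvd (bitstrings n) (P_psi m (pi / real p) n) (target_dist p n) \<le> 1/2 - 1/pi + C / real p"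
    if "n \<ge> n0" "m dvd (n - 1)" "prime p" "c1 * real n powr c \<le> real p" "real p \<le> c2 * real n powr c"
    for n p
  proof -
    have "n \<noteq> 0" using n0[OF that(1)] by (intro notI) simp
    with that(2) have "n = m * ((n - 1) div m) + 1" by simp
    from tvd_P_psi_le_parameters[OF assms(1) m(2) assms(3) m(1) this that(3-5)] n0[OF that(1)]
    show ?thesis unfolding C_def by blast
  qed
  then show ?thesis using \<open>C > 0\<close> unfolding m_def Let_def by blast
qed

end
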